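(* Let $\mathcal{H}$ be a complex Hilbert space, let $T, S\in\mathbb{B}(\mathcal{H})$ be self-adjoint operators and let $N(\cdot)$ be a self-adjoint algebra norm on $\mathbb{B}(\mathcal{H})$. If $TS = ST$ or $TS=-ST$, then $$w_{N}(TS) \leq \min\{N(T)w_{N}(S),\ N(S)w_{N}(T)\}.$$
   Context: $\mathbb{B}(\mathcal{H})$ is the algebra of bounded linear operators on $\mathcal{H}$. A norm $N(\cdot)$ on $\mathbb{B}(\mathcal{H})$ is an algebra norm if $N(TS)\le N(T)N(S)$ for all $T,S$, and self-adjoint if $N(T^* )=N(T)$ for all $T$. For $A\in\mathbb{B}(\mathcal{H})$, ${\rm Re}(A)=\frac{A+A^*}{2}$. The generalized numerical radius is $w_N(T)=\sup_{\theta\in\mathbb{R}} N\big({\rm Re}(e^{i\theta}T)\big)$. *)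

theory Defs
  imports "HOL-Analysis.Analysis"
begin

text \<open>HOL-Analysis only provides real inner product spaces, so complex ones are
introduced here as a type class: a real normed vector space carrying a complex
scalar multiplication (compatible with the real one) and a complex inner product,
linear in the second and conjugate-linear in the first argument, inducing the norm.\<close>

class complex_inner_space = real_normed_vector +
  fixes scaleC :: "complex \<Rightarrow> 'a \<Rightarrow> 'a"
    and cinner :: "'a \<Rightarrow> 'a \<Rightarrow> complex"
  assumes scaleC_add_left: "scaleC (a + b) x = scaleC a x + scaleC b x"
    and scaleC_add_right: "scaleC a (x + y) = scaleC a x + scaleC a y"
    and scaleC_scaleC: "scaleC a (scaleC b x) = scaleC (a * b) x"
    and scaleC_one: "scaleC 1 x = x"
    and scaleR_scaleC: "scaleR r x = scaleC (complex_of_real r) x"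
    and cinner_commute: "cinner x y = cnj (cinner y x)"
    and cinner_add_left: "cinner (x + y) z = cinner x z + cinner y z"
    and cinner_scaleC_left: "cinner (scaleC c x) y = cnj c * cinner x y"
    and cinner_ge_zero: "Im (cinner x x) = 0 \<and> 0 \<le> Re (cinner x x)"
    and cinner_eq_zero_iff: "cinner x x = 0 \<longleftrightarrow> x = 0"
    and norm_eq_sqrt_cinner: "norm x = sqrt (Re (cinner x x))"

class chilbert_space = complex_inner_space + complete_space

text \<open>Sanity check that the classes are not vacuous: \<open>complex\<close> is an instance.\<close>

instantiation complex :: complex_inner_space
begin
definition scaleC_complex :: "complex \<Rightarrow> complex \<Rightarrow> complex" where
  "scaleC_complex a x = a * x"
definition cinner_complex :: "complex \<Rightarrow> complex \<Rightarrow> complex" where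
  "cinner_complex x y = cnj x * y"
instance
proof
  fix a b x y z c :: complex and r :: real
  show "scaleC (a + b) x = scaleC a x + scaleC b x" by (simp add: scaleC_complex_def algebra_simps)
  show "scaleC a (x + y) = scaleC a x + scaleC a y" by (simp add: scaleC_complex_def algebra_simps)
  show "scaleC a (scaleC b x) = scaleC (a * b) x" by (simp add: scaleC_complex_def algebra_simps)
  show "scaleC 1 x = x" by (simp add: scaleC_complex_def)
  show "scaleR r x = scaleC (complex_of_real r) x" by (simp add: scaleC_complex_def scaleR_conv_of_real)
  show "cinner x y = cnj (cinner y x)" by (simp add: cinner_complex_def)
  show "cinner (x + y) z = cinner x z + cinner y z" by (simp add: cinner_complex_def algebra_simps)
  show "cinner (scaleC c x) y = cnj c * cinner x y" by (simp add: cinner_complex_def scaleC_complex_def)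
  show "Im (cinner x x) = 0 \<and> 0 \<le> Re (cinner x x)" by (simp add: cinner_complex_def)
  show "cinner x x = 0 \<longleftrightarrow> x = 0" by (simp add: cinner_complex_def)
  show "norm x = sqrt (Re (cinner x x))"
    by (simp add: cinner_complex_def cmod_def power2_eq_square)
qed
end

instance complex :: chilbert_space ..

definition bounded_clinear_op :: "('a::complex_inner_space \<Rightarrow> 'a) \<Rightarrow> bool" where
  "bounded_clinear_op T \<longleftrightarrow>
     (\<forall>x y. T (x + y) = T x + T y) \<and>
     (\<forall>c x. T (scaleC c x) = scaleC c (T x)) \<and>
     (\<exists>K. \<forall>x. norm (T x) \<le> norm x * K)"

definition adj :: "('a::complex_inner_space \<Rightarrow> 'a) \<Rightarrow> ('a \<Rightarrow> 'a)" where
  "adj T = (SOME A. bounded_clinear_op A \<and> (\<forall>x y. cinner (T x) y = cinner x (A y)))"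

definition selfadjoint_op :: "('a::complex_inner_space \<Rightarrow> 'a) \<Rightarrow> bool" where
  "selfadjoint_op T \<longleftrightarrow> (\<forall>x y. cinner (T x) y = cinner x (T y))"

definition op_scale :: "complex \<Rightarrow> ('a::complex_inner_space \<Rightarrow> 'a) \<Rightarrow> ('a \<Rightarrow> 'a)" where
  "op_scale c T = (\<lambda>x. scaleC c (T x))"

definition op_Re :: "('a::complex_inner_space \<Rightarrow> 'a) \<Rightarrow> ('a \<Rightarrow> 'a)" where
  "op_Re A = op_scale (1/2) (\<lambda>x. A x + adj A x)"

definition op_norm_on_BH :: "(('a::complex_inner_space \<Rightarrow> 'a) \<Rightarrow> real) \<Rightarrow> bool" where
  "op_norm_on_BH N \<longleftrightarrow>
     (\<forall>T. bounded_clinear_op T \<longrightarrow> 0 \<le> N T) \<and>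
     (\<forall>T. bounded_clinear_op T \<longrightarrow> (N T = 0 \<longleftrightarrow> T = (\<lambda>x. 0))) \<and>
     (\<forall>c T. bounded_clinear_op T \<longrightarrow> N (op_scale c T) = cmod c * N T) \<and>
     (\<forall>T S. bounded_clinear_op T \<longrightarrow> bounded_clinear_op S \<longrightarrow>
        N (\<lambda>x. T x + S x) \<le> N T + N S)"

definition algebra_norm :: "(('a::complex_inner_space \<Rightarrow> 'a) \<Rightarrow> real) \<Rightarrow> bool" where
  "algebra_norm N \<longleftrightarrow> op_norm_on_BH N \<and>
     (\<forall>T S. bounded_clinear_op T \<longrightarrow> bounded_clinear_op S \<longrightarrow> N (T \<circ> S) \<le> N T * N S)"

definition selfadjoint_norm :: "(('a::complex_inner_space \<Rightarrow> 'a) \<Rightarrow> real) \<Rightarrow> bool" where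
  "selfadjoint_norm N \<longleftrightarrow> (\<forall>T. bounded_clinear_op T \<longrightarrow> N (adj T) = N T)"

definition w_N :: "(('a::complex_inner_space \<Rightarrow> 'a) \<Rightarrow> real) \<Rightarrow> ('a \<Rightarrow> 'a) \<Rightarrow> real" where
  "w_N N T = (SUP \<theta>::real. N (op_Re (op_scale (cis \<theta>) T)))"

end

theory Submission
  imports Defs
begin

text \<open>If \<open>X\<^sup>* = e X\<close> with \<open>|e| = 1\<close>, then \<open>Re (c X) = ((c + cnj c e) / 2) X\<close>, and the scalar has
modulus at most 1 for \<open>|c| = 1\<close>; hence \<open>w\<^sub>N(X) \<le> N(X)\<close>, with equality for self-adjoint \<open>X\<close>
(take \<open>c = 1\<close>). If \<open>T, S\<close> are self-adjoint and commute or anticommute, then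
\<open>(TS)\<^sup>* = ST = \<plusminus>TS\<close>, so \<open>w\<^sub>N(TS) \<le> N(TS) \<le> N(T) N(S)\<close>, and \<open>N(T) = w\<^sub>N(T)\<close>, \<open>N(S) = w\<^sub>N(S)\<close>.\<close>

lemma cinner_add_right:
  fixes x y z :: "'a::complex_inner_space"
  shows "cinner x (y + z) = cinner x y + cinner x z"
  by (metis cinner_commute cinner_add_left complex_cnj_add)

lemma cinner_scaleC_right:
  fixes x y :: "'a::complex_inner_space"
  shows "cinner x (scaleC c y) = c * cinner x y"
  by (metis cinner_commute cinner_scaleC_left complex_cnj_mult complex_cnj_cnj)

lemma cinner_diff_right:
  fixes x y z :: "'a::complex_inner_space"
  shows "cinner x (y - z) = cinner x y - cinner x z"
  by (metis cinner_add_right diff_add_cancel add_diff_cancel)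

lemma scaleC_minus1_left: "scaleC (-1) (x::'a::complex_inner_space) = - x"
  by (metis scaleR_scaleC scaleR_minus1_left of_real_minus of_real_1)

lemma norm_scaleC: "norm (scaleC c (x::'a::complex_inner_space)) = cmod c * norm x"
proof -
  have "cinner (scaleC c x) (scaleC c x) = (cnj c * c) * cinner x x"
    by (simp add: cinner_scaleC_left cinner_scaleC_right)
  also have "cnj c * c = complex_of_real ((cmod c)\<^sup>2)"
    by (metis complex_norm_square mult.commute)
  finally have "cinner (scaleC c x) (scaleC c x) = complex_of_real ((cmod c)\<^sup>2) * cinner x x" .
  then have "Re (cinner (scaleC c x) (scaleC c x)) = (cmod c)\<^sup>2 * Re (cinner x x)"
    by simp
  then show ?thesis
    using cinner_ge_zero[of x]
    by (simp add: norm_eq_sqrt_cinner[of "scaleC c x"] norm_eq_sqrt_cinner[of x] real_sqrt_mult)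
qed

lemma bounded_clinear_op_scale:
  assumes "bounded_clinear_op (X::'a::complex_inner_space \<Rightarrow> 'a)"
  shows "bounded_clinear_op (op_scale c X)"
proof -
  from assms obtain K where K: "\<And>x. norm (X x) \<le> norm x * K"
    and add: "\<And>x y. X (x + y) = X x + X y" and hom: "\<And>d x. X (scaleC d x) = scaleC d (X x)"
    unfolding bounded_clinear_op_def by blast
  have "norm (scaleC c (X x)) \<le> norm x * (cmod c * K)" for x
    using mult_left_mono[OF K[of x], of "cmod c"] by (simp add: norm_scaleC mult.left_commute)
  moreover have "scaleC c (X (scaleC d x)) = scaleC d (scaleC c (X x))" for d x
    by (simp add: hom scaleC_scaleC mult.commute)
  ultimately show ?thesis
    unfolding bounded_clinear_op_def op_scale_def by (auto simp: add scaleC_add_right)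
qed

lemma bounded_clinear_op_comp:
  assumes "bounded_clinear_op (T::'a::complex_inner_space \<Rightarrow> 'a)" and "bounded_clinear_op S"
  shows "bounded_clinear_op (T \<circ> S)"
proof -
  from assms obtain K L where K: "\<And>x. norm (T x) \<le> norm x * K" and L: "\<And>x. norm (S x) \<le> norm x * L"
    unfolding bounded_clinear_op_def by blast
  have "norm (T (S x)) \<le> norm x * (max L 0 * max K 0)" for x
  proof -
    have "norm (T (S x)) \<le> norm (S x) * max K 0"
      using K[of "S x"] by (smt (verit) mult_left_mono norm_ge_zero)
    also have "\<dots> \<le> (norm x * max L 0) * max K 0"
      using L[of x] by (intro mult_right_mono) (smt (verit) mult_left_mono norm_ge_zero, simp)
    finally show ?thesis by (simp add: mult.assoc)
  qed
  then show ?thesis using assms unfolding bounded_clinear_op_def by auto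
qed

lemma adj_eqI:
  assumes "bounded_clinear_op (A::'a::complex_inner_space \<Rightarrow> 'a)"
    and "\<And>x y. cinner (T x) y = cinner x (A y)"
  shows "adj T = A"
proof
  fix y
  have "bounded_clinear_op (adj T) \<and> (\<forall>x y. cinner (T x) y = cinner x (adj T y))"
    unfolding adj_def by (rule someI[where x = A]) (simp add: assms)
  then have "cinner x (adj T y) = cinner x (A y)" for x
    using assms(2) by metis
  then have "cinner (adj T y - A y) (adj T y - A y) = 0"
    by (simp add: cinner_diff_right)
  then show "adj T y = A y"
    by (simp add: cinner_eq_zero_iff)
qed

lemma op_Re_op_scale:
  assumes "bounded_clinear_op (X::'a::complex_inner_space \<Rightarrow> 'a)"
    and "\<And>x y. cinner (X x) y = cinner x (scaleC e (X y))"
  shows "op_Re (op_scale c X) = op_scale ((c + cnj c * e) / 2) X"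
proof -
  have "adj (op_scale c X) = op_scale (cnj c * e) X"
    using assms by (intro adj_eqI bounded_clinear_op_scale)
      (simp_all add: op_scale_def cinner_scaleC_left cinner_scaleC_right scaleC_scaleC)
  then show ?thesis
    by (simp add: op_Re_def op_scale_def scaleC_scaleC scaleC_add_right[symmetric]
        scaleC_add_left[symmetric] add_divide_distrib)
qed

lemma cmod_half_sum_le_1:
  assumes "cmod c = 1" and "cmod e = 1"
  shows "cmod ((c + cnj c * e) / 2) \<le> 1"
proof -
  have "cmod (c + cnj c * e) \<le> cmod c + cmod (cnj c * e)"
    by (rule norm_triangle_ineq)
  also have "\<dots> = 2"
    using assms by (simp add: norm_mult)
  finally show ?thesis
    by (simp add: norm_divide)
qed

lemma op_norm_on_BH_nonneg:
  "op_norm_on_BH N \<Longrightarrow> bounded_clinear_op X \<Longrightarrow> 0 \<le> N X"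
  by (simp add: op_norm_on_BH_def)

lemma N_op_Re_cis_scale:
  assumes "op_norm_on_BH N" and "bounded_clinear_op (X::'a::complex_inner_space \<Rightarrow> 'a)"
    and "\<And>x y. cinner (X x) y = cinner x (scaleC e (X y))"
  shows "N (op_Re (op_scale (cis t) X)) = cmod ((cis t + cnj (cis t) * e) / 2) * N X"
  using assms by (simp add: op_Re_op_scale op_norm_on_BH_def)

lemma N_op_Re_cis_scale_le:
  assumes "op_norm_on_BH N" and "bounded_clinear_op (X::'a::complex_inner_space \<Rightarrow> 'a)"
    and "\<And>x y. cinner (X x) y = cinner x (scaleC e (X y))" and "cmod e = 1"
  shows "N (op_Re (op_scale (cis t) X)) \<le> N X"
  unfolding N_op_Re_cis_scale[OF assms(1-3)]
  using assms op_norm_on_BH_nonneg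
  by (intro mult_left_le_one_le cmod_half_sum_le_1) auto

lemma w_N_le:
  assumes "op_norm_on_BH N" and "bounded_clinear_op (X::'a::complex_inner_space \<Rightarrow> 'a)"
    and "\<And>x y. cinner (X x) y = cinner x (scaleC e (X y))" and "cmod e = 1"
  shows "w_N N X \<le> N X"
  unfolding w_N_def using N_op_Re_cis_scale_le[OF assms] by (intro cSUP_least) auto

lemma w_N_selfadjoint:
  assumes N: "op_norm_on_BH N" and "bounded_clinear_op (X::'a::complex_inner_space \<Rightarrow> 'a)"
    and "selfadjoint_op X"
  shows "w_N N X = N X"
proof -
  have X: "cinner (X x) y = cinner x (scaleC 1 (X y))" for x y
    using \<open>selfadjoint_op X\<close> by (simp add: selfadjoint_op_def scaleC_one)
  note le = N_op_Re_cis_scale_le[OF N \<open>bounded_clinear_op X\<close> X]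
  have "N X = N (op_Re (op_scale (cis 0) X))"
    using N_op_Re_cis_scale[OF N \<open>bounded_clinear_op X\<close> X, of 0] by simp
  also have "\<dots> \<le> w_N N X"
    unfolding w_N_def using le by (intro cSUP_upper bdd_aboveI[where M = "N X"]) auto
  finally show ?thesis
    using w_N_le[OF N \<open>bounded_clinear_op X\<close> X] by simp
qed

lemma selfadjoint_comp_adjoint_sign:
  assumes "selfadjoint_op (T::'a::complex_inner_space \<Rightarrow> 'a)" and "selfadjoint_op S"
    and "T \<circ> S = S \<circ> T \<or> T \<circ> S = (\<lambda>x. - (S \<circ> T) x)"
  obtains e where "cmod e = 1" and "\<And>x y. cinner ((T \<circ> S) x) y = cinner x (scaleC e ((T \<circ> S) y))"
proof -
  have TS: "cinner ((T \<circ> S) x) y = cinner x (S (T y))" for x y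
    using assms(1,2) by (simp add: selfadjoint_op_def)
  consider "T \<circ> S = S \<circ> T" | "T \<circ> S = (\<lambda>x. - (S \<circ> T) x)"
    using assms(3) by blast
  then show ?thesis
  proof cases
    case 1
    then have "S (T y) = scaleC 1 ((T \<circ> S) y)" for y
      by (metis comp_apply scaleC_one)
    then show ?thesis using that[of 1] TS by simp
  next
    case 2
    then have "S (T y) = scaleC (-1) ((T \<circ> S) y)" for y
      by (metis comp_apply scaleC_minus1_left minus_minus)
    then show ?thesis using that[of "-1"] TS by simp
  qed
qed

theorem corollary2p9:
  fixes T S :: "'a::chilbert_space \<Rightarrow> 'a"
    and N :: "('a \<Rightarrow> 'a) \<Rightarrow> real"
  assumes "bounded_clinear_op T" and "bounded_clinear_op S"
    and "selfadjoint_op T" and "selfadjoint_op S"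
    and "algebra_norm N" and "selfadjoint_norm N"
    and "T \<circ> S = S \<circ> T \<or> T \<circ> S = (\<lambda>x. - (S \<circ> T) x)"
  shows "w_N N (T \<circ> S) \<le> min (N T * w_N N S) (N S * w_N N T)"
proof -
  have N: "op_norm_on_BH N" using \<open>algebra_norm N\<close> by (simp add: algebra_norm_def)
  obtain e where "cmod e = 1" and "\<And>x y. cinner ((T \<circ> S) x) y = cinner x (scaleC e ((T \<circ> S) y))"
    using selfadjoint_comp_adjoint_sign[OF assms(3,4,7)] by blast
  then have "w_N N (T \<circ> S) \<le> N (T \<circ> S)"
    using w_N_le[OF N bounded_clinear_op_comp[OF assms(1,2)]] by blast
  also have "\<dots> \<le> N T * N S"
    using assms(1,2,5) by (simp add: algebra_norm_def)
  finally show ?thesis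
    using w_N_selfadjoint[OF N assms(1,3)] w_N_selfadjoint[OF N assms(2,4)] by (simp add: mult.commute)
qed

end
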